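(* Up to isomorphism, the complex exceptional Lie algebra $\mathfrak{e}_8$ has exactly two pairwise non-isomorphic $|3|$-gradings $\mathfrak{n}_{-3}\oplus\cdots\oplus\mathfrak{n}_3$: for $\Sigma=\{\alpha_2\}$ one has $\dim\mathfrak{n}_{-3}=8$, $\dim\mathfrak{n}_{-2}=28$, $\dim\mathfrak{n}_{-1}=56$; for $\Sigma=\{\alpha_7\}$ one has $\dim\mathfrak{n}_{-3}=2$, $\dim\mathfrak{n}_{-2}=27$, $\dim\mathfrak{n}_{-1}=54$.
   Context: Bourbaki labeling of $\mathfrak{e}_8$: Dynkin diagram the chain $\alpha_1-\alpha_3-\alpha_4-\alpha_5-\alpha_6-\alpha_7-\alpha_8$ with $\alpha_2$ attached to $\alpha_4$; highest root $2\alpha_1+3\alpha_2+4\alpha_3+6\alpha_4+5\alpha_5+4\alpha_6+3\alpha_7+2\alpha_8$. For a root $\alpha=\sum a_l\alpha_l$ and a subset $\Sigma$ of simple roots, $ht_\Sigma(\alpha)=\sum_{\alpha_l\in\Sigma}a_l$; the grading associated to $\Sigma$ is $\mathfrak{n}_m=\bigoplus_{ht_\Sigma(\alpha)=m}\mathfrak{g}_\alpha$ ($m\ne0$), $\mathfrak{n}_0=\mathfrak{h}\oplus\bigoplus_{ht_\Sigma(\alpha)=0}\mathfrak{g}_\alpha$. The $|3|$-gradings are those associated to subsets $\Sigma$ for which the highest root has $\Sigma$-height exactly $3$; isomorphism of gradings means isomorphism of graded Lie algebras. *)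

theory Defs
  imports Main
begin

text \<open>Root system of e8, Bourbaki labeling. A root is represented by its list of
coefficients [a1,...,a8] w.r.t. the simple roots alpha_1..alpha_8 (index l stored at
position l-1).\<close>

definition e8_edges :: "(nat \<times> nat) set" where
  "e8_edges = {(1,3),(3,4),(4,5),(5,6),(6,7),(7,8),(2,4)}"

definition e8_cartan :: "nat \<Rightarrow> nat \<Rightarrow> int" where
  "e8_cartan i j = (if i = j then 2
                    else if (i,j) \<in> e8_edges \<or> (j,i) \<in> e8_edges then -1 else 0)"

definition e8_simple :: "nat \<Rightarrow> int list" where
  "e8_simple l = map (\<lambda>j. if j = l then 1 else 0) [1..<9]"

definition e8_pair :: "int list \<Rightarrow> nat \<Rightarrow> int" where
  "e8_pair a l = (\<Sum>j\<in>{1..8}. a ! (j - 1) * e8_cartan j l)"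

definition e8_refl :: "nat \<Rightarrow> int list \<Rightarrow> int list" where
  "e8_refl l a = map2 (\<lambda>x y. x - e8_pair a l * y) a (e8_simple l)"

text \<open>Positive roots: generated from the simple roots by simple reflections
(s_l permutes the positive roots other than alpha_l).\<close>
inductive e8_pos_root :: "int list \<Rightarrow> bool" where
  simple: "l \<in> {1..8} \<Longrightarrow> e8_pos_root (e8_simple l)"
| refl: "e8_pos_root a \<Longrightarrow> l \<in> {1..8} \<Longrightarrow> a \<noteq> e8_simple l \<Longrightarrow> e8_pos_root (e8_refl l a)"

definition e8_roots :: "int list set" where
  "e8_roots = {a. e8_pos_root a} \<union> {map uminus a | a. e8_pos_root a}"

definition e8_highest_root :: "int list" where
  "e8_highest_root = [2,3,4,6,5,4,3,2]"

definition ht :: "nat set \<Rightarrow> int list \<Rightarrow> int" where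
  "ht \<Sigma> a = (\<Sum>l\<in>\<Sigma>. a ! (l - 1))"

text \<open>dim n_m (m nonzero) = number of roots of Sigma-height m.\<close>
definition grading_dim :: "nat set \<Rightarrow> int \<Rightarrow> nat" where
  "grading_dim \<Sigma> m = card {a \<in> e8_roots. ht \<Sigma> a = m}"

definition is_3_grading :: "nat set \<Rightarrow> bool" where
  "is_3_grading \<Sigma> \<longleftrightarrow> \<Sigma> \<subseteq> {1..8} \<and> ht \<Sigma> e8_highest_root = 3"

end

theory Submission
  imports Defs
begin

text \<open>The positive roots are produced level by level: the roots of height \<open>k + 1\<close> are
  images of roots of height \<open>k\<close> under simple reflections raising the height by one. All
  vectors obtained this way are positive roots, and since the resulting list of 120 vectors is
  closed under every simple reflection, it contains all positive roots. A root of negative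
  \<open>\<Sigma>\<close>-height is the negative of a positive root, so \<open>dim n\<^sub>-\<^sub>m\<close> counts the positive roots
  of \<open>\<Sigma>\<close>-height \<open>m\<close>. Finally, every coefficient of the highest root is at least 2, so
  \<open>\<Sigma>\<close>-height 3 forces \<open>\<Sigma> = {\<alpha>\<^sub>l}\<close> with coefficient 3, i.e. \<open>l = 2\<close> or \<open>l = 7\<close>.\<close>

definition e8_neighbours :: "nat \<Rightarrow> nat list" where
  "e8_neighbours l = [j \<leftarrow> [1..<9]. (l, j) \<in> e8_edges \<or> (j, l) \<in> e8_edges]"

lemma e8_neighbours_code [code]:
  "e8_neighbours l =
    (if l = 1 then [3] else if l = 2 then [4] else if l = 3 then [1, 4] else if l = 4 then [2, 3, 5]
     else if l = 5 then [4, 6] else if l = 6 then [5, 7] else if l = 7 then [6, 8] else if l = 8 then [7]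
     else [])"
  by (auto simp: e8_neighbours_def e8_edges_def upt_rec)

definition e8_reflect :: "nat \<Rightarrow> int list \<Rightarrow> int list" where
  "e8_reflect l a = a[l - 1 := (\<Sum>j\<leftarrow>e8_neighbours l. a ! (j - 1)) - a ! (l - 1)]"

lemma e8_refl_eq_reflect:
  assumes "length a = 8" and "l \<in> {1..8}"
  shows "e8_refl l a = e8_reflect l a"
proof -
  obtain a1 a2 a3 a4 a5 a6 a7 a8 where a: "a = [a1, a2, a3, a4, a5, a6, a7, a8]"
    using assms(1) by (auto simp: length_Suc_conv numeral_eq_Suc)
  have "l = 1 \<or> l = 2 \<or> l = 3 \<or> l = 4 \<or> l = 5 \<or> l = 6 \<or> l = 7 \<or> l = 8"
    using assms(2) by auto
  then show ?thesis
    unfolding a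
    by (elim disjE) (simp_all add: e8_refl_def e8_reflect_def e8_neighbours_code e8_pair_def
        e8_cartan_def e8_edges_def e8_simple_def upt_rec numeral_eq_Suc atLeastAtMostSuc_conv)
qed

lemma length_e8_simple [simp]: "length (e8_simple l) = 8"
  by (simp add: e8_simple_def)

lemma e8_pos_root_length: "e8_pos_root a \<Longrightarrow> length a = 8"
  by (induction rule: e8_pos_root.induct) (simp_all add: e8_refl_def)

lemma e8_pos_root_reflect:
  "e8_pos_root a \<Longrightarrow> l \<in> {1..8} \<Longrightarrow> a \<noteq> e8_simple l \<Longrightarrow> e8_pos_root (e8_reflect l a)"
  by (metis e8_pos_root.refl e8_pos_root_length e8_refl_eq_reflect)

lemma e8_pos_root_subset:
  assumes simple: "\<And>l. l \<in> {1..8} \<Longrightarrow> e8_simple l \<in> S"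
    and closed: "\<And>a l. a \<in> S \<Longrightarrow> l \<in> {1..8} \<Longrightarrow> a \<noteq> e8_simple l \<Longrightarrow> e8_reflect l a \<in> S"
    and "e8_pos_root a"
  shows "a \<in> S"
  using \<open>e8_pos_root a\<close>
proof (induction rule: e8_pos_root.induct)
  case (simple l)
  then show ?case by (rule assms(1))
next
  case (refl a l)
  then show ?case
    using closed e8_pos_root_length e8_refl_eq_reflect by metis
qed

definition e8_raise :: "int list list \<Rightarrow> int list list" where
  "e8_raise xs = remdups
     [e8_reflect l a. a \<leftarrow> xs, l \<leftarrow> [1..<9], a \<noteq> e8_simple l, sum_list (e8_reflect l a) = sum_list a + 1]"

fun e8_levels :: "nat \<Rightarrow> int list list \<Rightarrow> int list list list" where
  "e8_levels 0 xs = []"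
| "e8_levels (Suc n) xs = xs # e8_levels n (e8_raise xs)"

text \<open>29 is the height of the highest root.\<close>
definition e8_root_levels :: "int list list list" where
  "e8_root_levels = e8_levels 29 (map e8_simple [1..<9])"

definition e8_pos_roots :: "int list list" where
  "e8_pos_roots = concat e8_root_levels"

lemma e8_levels_pos_root:
  "\<forall>b\<in>set xs. e8_pos_root b \<Longrightarrow> a \<in> set (concat (e8_levels n xs)) \<Longrightarrow> e8_pos_root a"
proof (induction n arbitrary: xs)
  case (Suc n)
  have "\<forall>b\<in>set (e8_raise xs). e8_pos_root b"
    using Suc.prems(1) by (auto simp: e8_raise_def intro: e8_pos_root_reflect)
  then show ?case
    using Suc by auto
qed simp

lemma e8_pos_roots_sound: "a \<in> set e8_pos_roots \<Longrightarrow> e8_pos_root a"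
  unfolding e8_pos_roots_def e8_root_levels_def
  by (rule e8_levels_pos_root) (auto intro: e8_pos_root.simple)

text \<open>A simple reflection changes the height of a root by at most one, so its image
  under \<open>s\<^sub>l\<close> is looked up in the neighbouring levels only.\<close>
fun levels_reflection_closed :: "int list list \<Rightarrow> int list list list \<Rightarrow> bool" where
  "levels_reflection_closed prev [] = True"
| "levels_reflection_closed prev (cur # rest) =
     (list_all (\<lambda>a. list_all (\<lambda>l. a = e8_simple l \<or> e8_reflect l a \<in> set (prev @ cur @ concat (take 1 rest)))
        [1..<9]) cur
      \<and> levels_reflection_closed cur rest)"

lemma levels_reflection_closedD:
  assumes "levels_reflection_closed prev xss" and "a \<in> set (concat xss)" and "l \<in> {1..8}"
  shows "a = e8_simple l \<or> e8_reflect l a \<in> set (prev @ concat xss)"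
  using assms
proof (induction xss arbitrary: prev)
  case (Cons cur rest)
  have l: "l \<in> set [1..<9]"
    using Cons.prems(3) by auto
  show ?case
  proof (cases "a \<in> set cur")
    case True
    then have "a = e8_simple l \<or> e8_reflect l a \<in> set (prev @ cur @ concat (take 1 rest))"
      using Cons.prems(1) l by (auto simp: list_all_iff)
    moreover have "set (concat (take 1 rest)) \<subseteq> set (concat rest)"
      by (cases rest) auto
    ultimately show ?thesis
      by auto
  next
    case False
    then show ?thesis
      using Cons.IH[of cur] Cons.prems by auto
  qed
qed simp

lemma e8_root_levels_reflection_closed: "levels_reflection_closed [] e8_root_levels"
  by code_simp

lemma e8_pos_roots_complete: "e8_pos_root a \<Longrightarrow> a \<in> set e8_pos_roots"
proof (rule e8_pos_root_subset)
  have "set (map e8_simple [1..<9]) \<subseteq> set e8_pos_roots"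
    unfolding e8_pos_roots_def e8_root_levels_def e8_levels.simps(2)[of 28, simplified] by simp
  then show "e8_simple l \<in> set e8_pos_roots" if "l \<in> {1..8}" for l
    using that by auto
  show "e8_reflect l a \<in> set e8_pos_roots"
    if "a \<in> set e8_pos_roots" "l \<in> {1..8}" "a \<noteq> e8_simple l" for a l
    using levels_reflection_closedD[OF e8_root_levels_reflection_closed, of a l] that
    by (simp add: e8_pos_roots_def)
qed

theorem e8_pos_root_iff: "e8_pos_root a \<longleftrightarrow> a \<in> set e8_pos_roots"
  using e8_pos_roots_sound e8_pos_roots_complete by blast

lemma e8_pos_roots_nonneg: "list_all (list_all (\<lambda>x. 0 \<le> x)) e8_pos_roots"
  by code_simp

lemma e8_pos_root_nonneg:
  assumes "e8_pos_root a" and "i < length a"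
  shows "0 \<le> a ! i"
  using e8_pos_roots_nonneg assms by (auto simp: e8_pos_root_iff list_all_iff)

lemma ht_uminus:
  assumes "\<Sigma> \<subseteq> {1..8}" and "length a = 8"
  shows "ht \<Sigma> (map uminus a) = - ht \<Sigma> a"
proof -
  have "map uminus a ! (l - 1) = - a ! (l - 1)" if "l \<in> \<Sigma>" for l
    using assms that by (subst nth_map) (auto dest!: subsetD)
  then show ?thesis
    by (simp add: ht_def sum_negf[symmetric])
qed

lemma ht_pos_root_nonneg:
  assumes "\<Sigma> \<subseteq> {1..8}" and "e8_pos_root a"
  shows "0 \<le> ht \<Sigma> a"
  using assms e8_pos_root_length e8_pos_root_nonneg
  unfolding ht_def by (force intro: sum_nonneg)

lemma grading_dim_neg:
  assumes \<Sigma>: "\<Sigma> \<subseteq> {1..8}" and "0 < m"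
  shows "grading_dim \<Sigma> (-m) = card (set (filter (\<lambda>a. ht \<Sigma> a = m) e8_pos_roots))"
proof -
  have "{a \<in> e8_roots. ht \<Sigma> a = -m} = map uminus ` {a. e8_pos_root a \<and> ht \<Sigma> a = m}"
    using \<open>0 < m\<close> ht_pos_root_nonneg[OF \<Sigma>] ht_uminus[OF \<Sigma>] e8_pos_root_length
    by (fastforce simp: e8_roots_def)
  moreover have "inj (map (uminus :: int \<Rightarrow> int))"
    by (simp add: inj_mapI)
  ultimately show ?thesis
    unfolding grading_dim_def by (simp add: card_image inj_on_subset[of _ UNIV] e8_pos_root_iff)
qed

lemma e8_highest_root_coeff_ge_2: "l \<in> {1..8} \<Longrightarrow> 2 \<le> e8_highest_root ! (l - 1)"
  by (auto simp: e8_highest_root_def numeral_eq_Suc le_Suc_eq)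

lemma is_3_grading_singleton:
  assumes "is_3_grading \<Sigma>"
  obtains l where "\<Sigma> = {l}" and "l \<in> {1..8}" and "e8_highest_root ! (l - 1) = 3"
proof -
  have \<Sigma>: "\<Sigma> \<subseteq> {1..8}" and h: "(\<Sum>l\<in>\<Sigma>. e8_highest_root ! (l - 1)) = 3"
    using assms by (auto simp: is_3_grading_def ht_def)
  have "of_nat (card \<Sigma>) * 2 \<le> (\<Sum>l\<in>\<Sigma>. e8_highest_root ! (l - 1))"
    by (rule sum_bounded_below) (use e8_highest_root_coeff_ge_2 \<Sigma> in auto)
  moreover have "card \<Sigma> \<noteq> 0"
    using finite_subset[OF \<Sigma>] h by auto
  ultimately have "card \<Sigma> = 1"
    using h by auto
  then obtain l where "\<Sigma> = {l}"
    by (auto simp: card_Suc_eq)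
  with \<Sigma> h show ?thesis
    using that by auto
qed

lemma e8_3_gradings: "{\<Sigma>. is_3_grading \<Sigma>} = {{2}, {7}}"
proof (intro set_eqI iffI)
  fix \<Sigma> assume "\<Sigma> \<in> {\<Sigma>. is_3_grading \<Sigma>}"
  then obtain l where "\<Sigma> = {l}" "l \<in> {1..8}" "e8_highest_root ! (l - 1) = 3"
    using is_3_grading_singleton by blast
  then show "\<Sigma> \<in> {{2}, {7}}"
    by (auto simp: e8_highest_root_def numeral_eq_Suc le_Suc_eq)
qed (auto simp: is_3_grading_def ht_def e8_highest_root_def)

theorem proposition2p10:
  shows "{\<Sigma>. is_3_grading \<Sigma>} = {{2}, {7}}
    \<and> grading_dim {2} (-3) = 8 \<and> grading_dim {2} (-2) = 28 \<and> grading_dim {2} (-1) = 56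
    \<and> grading_dim {7} (-3) = 2 \<and> grading_dim {7} (-2) = 27 \<and> grading_dim {7} (-1) = 54"
proof -
  have "card (set (filter (\<lambda>a. ht {2} a = 3) e8_pos_roots)) = 8"
    "card (set (filter (\<lambda>a. ht {2} a = 2) e8_pos_roots)) = 28"
    "card (set (filter (\<lambda>a. ht {2} a = 1) e8_pos_roots)) = 56"
    "card (set (filter (\<lambda>a. ht {7} a = 3) e8_pos_roots)) = 2"
    "card (set (filter (\<lambda>a. ht {7} a = 2) e8_pos_roots)) = 27"
    "card (set (filter (\<lambda>a. ht {7} a = 1) e8_pos_roots)) = 54"
    by code_simp+
  then show ?thesis
    using e8_3_gradings by (simp add: grading_dim_neg)
qed

end
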